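(* Let $P$ be a poset, let $\mathbf{Ch}_P$ be the full subcategory of $\mathbf{Pos}_{in}$ whose objects are the chains of $P$, and let $\mathcal{F}_P:\mathbf{Ch}_P\to\mathbf{Pos}$ be the inclusion functor (the diagram of chains of $P$). Then $\operatorname{colim}\mathcal{F}_P=P$ in $\mathbf{Pos}$.
   Context: $\mathbf{Pos}$ is the category of posets and order-preserving maps; $\mathbf{Pos}_{in}$ is its wide subcategory whose morphisms are the order-preserving inclusions. A chain of $P$ is a totally ordered sub-poset of $P$ (with the induced order); morphisms in $\mathbf{Ch}_P$ are the inclusions between chains. *)

theory Defs
  imports Main
begin

definition poset_on :: "'a set \<Rightarrow> ('a \<Rightarrow> 'a \<Rightarrow> bool) \<Rightarrow> bool" where
  "poset_on A le \<longleftrightarrow>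
     (\<forall>x\<in>A. le x x) \<and>
     (\<forall>x\<in>A. \<forall>y\<in>A. le x y \<and> le y x \<longrightarrow> x = y) \<and>
     (\<forall>x\<in>A. \<forall>y\<in>A. \<forall>z\<in>A. le x y \<and> le y z \<longrightarrow> le x z)"

definition chain_of :: "'a set \<Rightarrow> ('a \<Rightarrow> 'a \<Rightarrow> bool) \<Rightarrow> 'a set \<Rightarrow> bool" where
  "chain_of A le C \<longleftrightarrow> C \<subseteq> A \<and> (\<forall>x\<in>C. \<forall>y\<in>C. le x y \<or> le y x)"

definition pos_hom :: "'a set \<Rightarrow> ('a \<Rightarrow> 'a \<Rightarrow> bool) \<Rightarrow> 'b set \<Rightarrow> ('b \<Rightarrow> 'b \<Rightarrow> bool) \<Rightarrow> ('a \<Rightarrow> 'b) \<Rightarrow> bool" where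
  "pos_hom A le B le' f \<longleftrightarrow> f ` A \<subseteq> B \<and> monotone_on A le le' f"

text \<open>A cocone over the chain diagram F_P with vertex (B, le'): one Pos-morphism g C : C \<rightarrow> B per
  chain C, compatible with the inclusions C \<subseteq> D between chains.\<close>
definition chain_cocone :: "'a set \<Rightarrow> ('a \<Rightarrow> 'a \<Rightarrow> bool) \<Rightarrow> 'b set \<Rightarrow> ('b \<Rightarrow> 'b \<Rightarrow> bool)
     \<Rightarrow> ('a set \<Rightarrow> 'a \<Rightarrow> 'b) \<Rightarrow> bool" where
  "chain_cocone A le B le' g \<longleftrightarrow>
     (\<forall>C. chain_of A le C \<longrightarrow> pos_hom C le B le' (g C)) \<and>
     (\<forall>C D. chain_of A le C \<longrightarrow> chain_of A le D \<longrightarrow> C \<subseteq> D \<longrightarrow> (\<forall>x\<in>C. g C x = g D x))"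

end

theory Submission
  imports Defs
begin

(* Every point x of P forms the chain {x}, so a cocone g determines the map x \<mapsto> g {x} x, and any
   factorization through P must be this map. Compatibility with the inclusions {x} \<subseteq> C makes it
   agree with every g C, and since each comparable pair x \<le> y is itself a chain {x, y}, it is
   monotone. *)

lemma chain_of_singleton:
  assumes "x \<in> A" and "le x x"
  shows "chain_of A le {x}"
  using assms by (simp add: chain_of_def)

lemma chain_of_pair:
  assumes "x \<in> A" "y \<in> A" "le x x" "le y y" "le x y"
  shows "chain_of A le {x, y}"
  using assms by (auto simp: chain_of_def)

lemma chain_cocone_inclusions: "chain_cocone A le A le (\<lambda>C x. x)"
  by (auto simp: chain_cocone_def pos_hom_def chain_of_def monotone_on_def)

definition chain_cocone_map :: "('a set \<Rightarrow> 'a \<Rightarrow> 'b) \<Rightarrow> 'a \<Rightarrow> 'b" where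
  "chain_cocone_map g x = g {x} x"

lemma chain_cocone_map_eq:
  assumes refl: "\<forall>x\<in>A. le x x" and cocone: "chain_cocone A le B le' g"
    and C: "chain_of A le C" and "x \<in> C"
  shows "chain_cocone_map g x = g C x"
proof -
  have "x \<in> A" using C \<open>x \<in> C\<close> by (auto simp: chain_of_def)
  then have "chain_of A le {x}" using refl by (simp add: chain_of_singleton)
  then show ?thesis
    using cocone C \<open>x \<in> C\<close> unfolding chain_cocone_def chain_cocone_map_def by blast
qed

lemma chain_cocone_map_pos_hom:
  assumes refl: "\<forall>x\<in>A. le x x" and cocone: "chain_cocone A le B le' g"
  shows "pos_hom A le B le' (chain_cocone_map g)"
  unfolding pos_hom_def
proof
  have hom: "pos_hom C le B le' (g C)" if "chain_of A le C" for C
    using cocone that by (simp add: chain_cocone_def)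
  show "chain_cocone_map g ` A \<subseteq> B"
  proof
    fix y assume "y \<in> chain_cocone_map g ` A"
    then obtain x where "x \<in> A" "y = g {x} x" by (auto simp: chain_cocone_map_def)
    with hom[of "{x}"] refl show "y \<in> B" by (simp add: chain_of_singleton pos_hom_def)
  qed
  show "monotone_on A le le' (chain_cocone_map g)"
  proof (rule monotone_onI)
    fix x y assume "x \<in> A" "y \<in> A" "le x y"
    with refl have pair: "chain_of A le {x, y}" by (simp add: chain_of_pair)
    then have "le' (g {x, y} x) (g {x, y} y)"
      using hom[OF pair] \<open>le x y\<close> by (simp add: pos_hom_def monotone_on_def)
    then show "le' (chain_cocone_map g x) (chain_cocone_map g y)"
      using chain_cocone_map_eq[OF refl cocone pair] by simp
  qed
qed

lemma chain_cocone_map_unique: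
  assumes refl: "\<forall>x\<in>A. le x x"
    and agree: "\<forall>C. chain_of A le C \<longrightarrow> (\<forall>x\<in>C. f x = g C x)" and "x \<in> A"
  shows "f x = chain_cocone_map g x"
  using agree chain_of_singleton[OF \<open>x \<in> A\<close>] refl \<open>x \<in> A\<close>
  by (simp add: chain_cocone_map_def)

theorem proposition6p1:
  fixes A :: "'a set" and le :: "'a \<Rightarrow> 'a \<Rightarrow> bool"
  assumes "poset_on A le"
  shows "chain_cocone A le A le (\<lambda>C x. x) \<and>
    (\<forall>(B :: 'b set) le' g. poset_on B le' \<longrightarrow> chain_cocone A le B le' g \<longrightarrow>
       (\<exists>f. pos_hom A le B le' f \<and> (\<forall>C. chain_of A le C \<longrightarrow> (\<forall>x\<in>C. f x = g C x)) \<and>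
            (\<forall>f'. pos_hom A le B le' f' \<and> (\<forall>C. chain_of A le C \<longrightarrow> (\<forall>x\<in>C. f' x = g C x))
                  \<longrightarrow> (\<forall>x\<in>A. f' x = f x))))"
proof -
  have refl: "\<forall>x\<in>A. le x x" using assms by (simp add: poset_on_def)
  have "\<exists>f. pos_hom A le B le' f \<and> (\<forall>C. chain_of A le C \<longrightarrow> (\<forall>x\<in>C. f x = g C x)) \<and>
            (\<forall>f'. pos_hom A le B le' f' \<and> (\<forall>C. chain_of A le C \<longrightarrow> (\<forall>x\<in>C. f' x = g C x))
                  \<longrightarrow> (\<forall>x\<in>A. f' x = f x))"
    if cocone: "chain_cocone A le B le' g" for B :: "'b set" and le' g
    using chain_cocone_map_pos_hom[OF refl cocone] chain_cocone_map_eq[OF refl cocone]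
      chain_cocone_map_unique[of A le, OF refl]
    by blast
  then show ?thesis using chain_cocone_inclusions by blast
qed

end
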